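(* Let $p$ be an odd prime and let $\mathcal T(\mathbf a)$, $\mathbf a=(a_1,\dots,a_k)$ with $k\ge 4$ and $\gcd(a_1,\dots,a_k)=1$, be a regular triangular form which is $p$-unstable. Then $\lambda_p(\mathcal T(\mathbf a))$ is also regular.
   Context: For positive integers $c_1,\dots,c_k$, $\mathcal T(c_1,\dots,c_k)=\sum c_i\,x_i(x_i+1)/2$. A nonnegative integer $n$ is represented if the equation $\mathcal T(\mathbf c)=n$ has a solution in $\mathbb Z^k$, and locally represented if it has a solution in $\mathbb Z_q^k$ for every prime $q$; the form is regular if it represents every positive integer it locally represents. For an odd prime $p$, $\overline{DQ_p(\mathbf c)}=\{\gamma\in\mathbb Z_p:\gamma=\sum c_iy_i^2,\ y_i\in\mathbb Z_p\}$, and $\mathcal T(\mathbf c)$ is $p$-unstable if $\overline{DQ_p(\mathbf c)}\ne\mathbb Z_p$. For primitive $\mathbf a=(a_1,\dots,a_k)$ and odd prime $p$, let $s_i=0$ if $p\mid a_i$ and $s_i=2$ otherwise, let $s=\min_i \mathrm{ord}_p(p^{s_i}a_i)\in\{1,2\}$, and define $\lambda_p(\mathcal T(\mathbf a))=\mathcal T(p^{s_1-s}a_1,\dots,p^{s_k-s}a_k)$. *)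

theory Defs
  imports "HOL-Computational_Algebra.Computational_Algebra" "HOL-Number_Theory.Number_Theory"
begin

(* A q-adic integer is represented as the compatible sequence of its residues
   g m \<in> {0..<q^m} modulo q^m (Z_q = inverse limit of Z/q^m Z). *)
definition padic :: "int \<Rightarrow> (nat \<Rightarrow> int) \<Rightarrow> bool" where
  "padic q g \<longleftrightarrow> (\<forall>m. 0 \<le> g m \<and> g m < q ^ m \<and> g (Suc m) mod q ^ m = g m)"

definition tri_val :: "int list \<Rightarrow> (nat \<Rightarrow> int) \<Rightarrow> int" where
  "tri_val c x = (\<Sum>i<length c. c ! i * (x i * (x i + 1) div 2))"

definition represented :: "int list \<Rightarrow> int \<Rightarrow> bool" where
  "represented c n \<longleftrightarrow> (\<exists>x :: nat \<Rightarrow> int. tri_val c x = n)"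

(* solvability of T(c)(x) = n in Z_q^k, written in the equivalent form
   sum c_i x_i (x_i+1) = 2n (Z_q is torsion-free), checked on every level q^m *)
definition locally_rep_at :: "int \<Rightarrow> int list \<Rightarrow> int \<Rightarrow> bool" where
  "locally_rep_at q c n \<longleftrightarrow>
     (\<exists>x :: nat \<Rightarrow> nat \<Rightarrow> int. (\<forall>i<length c. padic q (x i)) \<and>
        (\<forall>m. [(\<Sum>i<length c. c ! i * (x i m * (x i m + 1))) = 2 * n] (mod q ^ m)))"

definition locally_represented :: "int list \<Rightarrow> int \<Rightarrow> bool" where
  "locally_represented c n \<longleftrightarrow> (\<forall>q::int. prime q \<longrightarrow> locally_rep_at q c n)"

definition regular :: "int list \<Rightarrow> bool" where
  "regular c \<longleftrightarrow> (\<forall>n::int. n > 0 \<longrightarrow> locally_represented c n \<longrightarrow> represented c n)"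

definition in_DQ_closure :: "int \<Rightarrow> int list \<Rightarrow> (nat \<Rightarrow> int) \<Rightarrow> bool" where
  "in_DQ_closure p c \<gamma> \<longleftrightarrow>
     (\<exists>y :: nat \<Rightarrow> nat \<Rightarrow> int. (\<forall>i<length c. padic p (y i)) \<and>
        (\<forall>m. [(\<Sum>i<length c. c ! i * (y i m)\<^sup>2) = \<gamma> m] (mod p ^ m)))"

definition p_unstable :: "int \<Rightarrow> int list \<Rightarrow> bool" where
  "p_unstable p c \<longleftrightarrow> (\<exists>\<gamma>. padic p \<gamma> \<and> \<not> in_DQ_closure p c \<gamma>)"

definition s_exp :: "int \<Rightarrow> int \<Rightarrow> nat" where
  "s_exp p ai = (if p dvd ai then 0 else 2)"

definition s_min :: "int \<Rightarrow> int list \<Rightarrow> nat" where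
  "s_min p a = Min ((\<lambda>ai. multiplicity p (p ^ s_exp p ai * ai)) ` set a)"

(* lambda_p: a_i \<mapsto> p^(s_i - s) a_i, computed as (p^s_i a_i) / p^s (exact division) *)
definition lambda_p :: "int \<Rightarrow> int list \<Rightarrow> int list" where
  "lambda_p p a = map (\<lambda>ai. (p ^ s_exp p ai * ai) div p ^ s_min p a) a"

end

theory Submission imports Defs begin

text \<open>Put \<open>k = (p - 1)/2\<close>. Substituting \<open>x\<^sub>i = p y\<^sub>i + k\<close> in the coordinates with
  \<open>p \<nmid> a\<^sub>i\<close> turns \<open>x\<^sub>i(x\<^sub>i + 1)\<close> into \<open>p\<^sup>2 y\<^sub>i(y\<^sub>i + 1) + k(k + 1)\<close>, so that
  \<open>T(a)(x) = p\<^sup>s T(\<lambda>\<^sub>p a)(y) + K\<close> with a constant \<open>K \<ge> 0\<close>. If \<open>n\<close> is locally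
  represented by \<open>\<lambda>\<^sub>p(T(a))\<close>, then \<open>p\<^sup>s n + K\<close> is locally, hence by regularity globally,
  represented by \<open>T(a)\<close>, say by \<open>x\<close>. With \<open>z\<^sub>i = 2x\<^sub>i + 1\<close> the unimodular part
  \<open>\<Sum>\<^sub>p\<^sub>\<nmid>\<^sub>a\<^sub>i a\<^sub>i z\<^sub>i\<^sup>2\<close> vanishes mod \<open>p\<close>. An isotropic unimodular part would, by Hensel's
  lemma, represent all of \<open>\<int>\<^sub>p\<close>; as \<open>T(a)\<close> is \<open>p\<close>-unstable, all these \<open>z\<^sub>i\<close> are divisible
  by \<open>p\<close>, i.e. \<open>x\<^sub>i \<equiv> k (mod p)\<close>, and \<open>x\<close> comes from an integral \<open>y\<close> representing \<open>n\<close>.\<close>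

lemma padic_Suc_cong: "padic q g \<Longrightarrow> [g (Suc m) = g m] (mod q^m)"
  unfolding padic_def cong_def by (metis mod_pos_pos_trivial)

lemma padic_mod_power:
  fixes q :: int
  assumes "q > 0" "\<And>m. [f (Suc m) = f m] (mod q^m)"
  shows "padic q (\<lambda>m. f m mod q^m)"
  unfolding padic_def
proof (intro allI conjI)
  fix m
  show "0 \<le> f m mod q ^ m" "f m mod q ^ m < q ^ m" using assms(1) by simp_all
  have "q^m dvd q^Suc m" by (simp add: le_imp_power_dvd)
  then have "f (Suc m) mod q ^ Suc m mod q ^ m = f (Suc m) mod q^m" by (simp add: mod_mod_cancel)
  also have "\<dots> = f m mod q^m" using assms(2)[of m] by (simp add: cong_def)
  finally show "f (Suc m) mod q ^ Suc m mod q ^ m = f m mod q ^ m" .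
qed

lemma odd_prime_not_dvd_2: "prime (p::int) \<Longrightarrow> odd p \<Longrightarrow> \<not> p dvd 2"
  using primes_dvd_imp_eq[of p 2] by auto

lemma odd_prime_not_dvd_2_mult:
  fixes p :: int
  assumes "prime p" "odd p"
  shows "p dvd 2 * x \<longleftrightarrow> p dvd x"
  using assms odd_prime_not_dvd_2 by (auto simp: prime_dvd_mult_iff)

lemma hensel_lift_step:
  fixes p a v e :: int
  assumes p: "prime p" "odd p" and "\<not> p dvd a" "\<not> p dvd v" "k \<ge> 1"
    and "[a*v^2 = e] (mod p^k)"
  shows "\<exists>v'. [v' = v] (mod p^k) \<and> [a*v'^2 = e] (mod p^Suc k)"
proof -
  obtain r where r: "a*v^2 - e = p^k * r" using assms(6) by (auto simp: cong_iff_dvd_diff dvd_def)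
  have "\<not> p dvd 2*a*v" using assms by (simp add: prime_dvd_mult_iff odd_prime_not_dvd_2)
  then have "coprime (2*a*v) p" using p prime_imp_coprime coprime_commute by blast
  then obtain w where w: "[2*a*v*w = 1] (mod p)" using cong_solve_coprime_int by blast
  define t where "t = - r * w"
  have "[r + 2*a*v*t = r - r * (2*a*v*w)] (mod p)" by (simp add: t_def algebra_simps)
  also have "[r - r * (2*a*v*w) = r - r * 1] (mod p)" using w by (intro cong_diff cong_refl cong_scalar_left)
  finally have "p dvd r + 2*a*v*t" by (simp add: cong_0_iff)
  then have "p^Suc k dvd p^k * (r + 2*a*v*t)" by simp
  moreover have "p^Suc k dvd p^(k+k) * (a*t^2)" using assms(5) by (intro dvd_mult2 le_imp_power_dvd) simp
  moreover have "a*(v + p^k*t)^2 - e = p^k * (r + 2*a*v*t) + p^(k+k) * (a*t^2)"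
    using r by (simp add: power2_eq_square power_add algebra_simps)
  ultimately have "p^Suc k dvd a*(v + p^k*t)^2 - e" by simp
  moreover have "[v + p^k*t = v] (mod p^k)" by (simp add: cong_iff_dvd_diff)
  ultimately show ?thesis unfolding cong_iff_dvd_diff by blast
qed

lemma hensel_padic:
  fixes p a u C :: int
  assumes p: "prime p" "odd p" and a: "\<not> p dvd a" and u: "\<not> p dvd u" and \<delta>: "padic p \<delta>"
    and "[a*u^2 = \<delta> 1 - C] (mod p)"
  shows "\<exists>w. padic p w \<and> (\<forall>m. [a*(w m)^2 = \<delta> m - C] (mod p^m))"
proof -
  define lifts where "lifts k v v' \<longleftrightarrow>
    [v' = v] (mod p^Suc k) \<and> [a*v'^2 = \<delta> (Suc (Suc k)) - C] (mod p^Suc (Suc k))" for k v v'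
  define V where "V = rec_nat u (\<lambda>k v. SOME v'. lifts k v v')"
  have V_Suc: "V (Suc k) = (SOME v'. lifts k (V k) v')" for k unfolding V_def by simp
  have lift: "lifts k (V k) (V (Suc k))"
    if sq: "[a*(V k)^2 = \<delta> (Suc k) - C] (mod p^Suc k)" and unit: "\<not> p dvd V k" for k
  proof -
    have "[\<delta> (Suc k) - C = \<delta> (Suc (Suc k)) - C] (mod p^Suc k)"
      using padic_Suc_cong[OF \<delta>] by (intro cong_diff cong_refl) (rule cong_sym)
    with sq have "[a*(V k)^2 = \<delta> (Suc (Suc k)) - C] (mod p^Suc k)" by (rule cong_trans)
    then obtain v' where "lifts k (V k) v'"
      using hensel_lift_step[OF p a unit, of "Suc k"] unfolding lifts_def by auto
    then show ?thesis unfolding V_Suc by (rule someI)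
  qed
  have inv: "[a*(V k)^2 = \<delta> (Suc k) - C] (mod p^Suc k) \<and> [V k = u] (mod p)" for k
  proof (induction k)
    case 0 then show ?case using assms(6) by (simp add: V_def)
  next
    case (Suc k)
    then have "\<not> p dvd V k" using u by (metis cong_dvd_iff)
    with Suc have "lifts k (V k) (V (Suc k))" by (intro lift) auto
    then have "[V (Suc k) = V k] (mod p)" "[a*(V (Suc k))^2 = \<delta> (Suc (Suc k)) - C] (mod p^Suc (Suc k))"
      unfolding lifts_def by (auto elim: cong_dvd_modulus)
    with Suc show ?case by (auto intro: cong_trans)
  qed
  have comp: "[V (Suc m) = V m] (mod p^m)" for m
  proof -
    have "\<not> p dvd V m" using inv[of m] u by (metis cong_dvd_iff)
    with inv[of m] have "[V (Suc m) = V m] (mod p^Suc m)" using lift unfolding lifts_def by blast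
    then show ?thesis by (rule cong_dvd_modulus) (simp add: le_imp_power_dvd)
  qed
  define w where "w = (\<lambda>m. V m mod p^m)"
  have "padic p w" unfolding w_def using p prime_gt_0_int comp by (intro padic_mod_power) auto
  moreover have "[a*(w m)^2 = \<delta> m - C] (mod p^m)" for m
  proof -
    have "[a*(w m)^2 = a*(V m)^2] (mod p^m)" unfolding w_def by (intro cong_scalar_left cong_pow) simp
    also have "[a*(V m)^2 = \<delta> (Suc m) - C] (mod p^m)"
      using conjunct1[OF inv[of m]] by (rule cong_dvd_modulus) (simp add: le_imp_power_dvd)
    also have "[\<delta> (Suc m) - C = \<delta> m - C] (mod p^m)" using padic_Suc_cong[OF \<delta>] by (intro cong_diff cong_refl)
    finally show ?thesis .
  qed
  ultimately show ?thesis by blast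
qed

lemma dvd_sum_other_summand:
  fixes f :: "'a \<Rightarrow> 'b::comm_ring_1"
  assumes "finite A" "p dvd (\<Sum>i\<in>A. f i)" "i0 \<in> A" "\<not> p dvd f i0"
  shows "\<exists>i\<in>A. i \<noteq> i0 \<and> \<not> p dvd f i"
proof (rule ccontr)
  assume "\<not> ?thesis"
  then have "p dvd (\<Sum>i\<in>A - {i0}. f i)" by (intro dvd_sum) auto
  moreover have "(\<Sum>i\<in>A. f i) = f i0 + (\<Sum>i\<in>A - {i0}. f i)" using assms by (intro sum.remove)
  ultimately show False using assms(2,4) by (metis dvd_add_right_iff add.commute)
qed

text \<open>Isotropic unimodular part: the line through a zero \<open>z\<close> with \<open>z\<^sub>i\<^sub>0\<close> a unit and the
  basis vector \<open>e\<^sub>i\<^sub>0\<close> hits every residue class, with a unit coordinate at a unit coefficient.\<close>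

lemma isotropic_unit_part_represents_mod_p:
  fixes p c :: int and a :: "int list"
  assumes p: "prime p" "odd p"
    and iso: "p dvd (\<Sum>i<length a. if p dvd a!i then 0 else a!i * (z i)^2)"
    and i0: "i0 < length a" "\<not> p dvd a!i0" "\<not> p dvd z i0"
  shows "\<exists>Y l. l < length a \<and> \<not> p dvd a!l \<and> \<not> p dvd Y l \<and> [(\<Sum>i<length a. a!i * (Y i)^2) = c] (mod p)"
proof -
  define A where "A = a!i0"
  define Z where "Z = z i0"
  define f where "f = (\<lambda>i. if p dvd a!i then 0 else a!i * (z i)^2)"
  have "\<not> p dvd 2*A*Z" using assms unfolding A_def Z_def by (simp add: prime_dvd_mult_iff odd_prime_not_dvd_2)
  then have "coprime (2*A*Z) p" using p prime_imp_coprime coprime_commute by blast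
  then obtain v where v: "[2*A*Z*v = 1] (mod p)" using cong_solve_coprime_int by blast
  define t where "t = v * (c - A)"
  define Y where "Y = (\<lambda>i. (if p dvd a!i then 0 else t * z i) + (if i = i0 then 1 else 0))"
  have "a!i * (Y i)^2 = t^2 * f i + (if i = i0 then 2*t*A*Z + A else 0)" for i
    unfolding Y_def f_def A_def Z_def using i0 by (auto simp: power2_eq_square algebra_simps)
  then have sumY: "(\<Sum>i<length a. a!i * (Y i)^2) = t^2 * (\<Sum>i<length a. f i) + (2*t*A*Z + A)"
    using i0 by (simp add: sum.distrib sum_distrib_left)
  have "[2*t*A*Z = (2*A*Z*v) * (c - A)] (mod p)" by (simp add: t_def algebra_simps)
  also have "[(2*A*Z*v) * (c - A) = 1 * (c - A)] (mod p)" using v by (rule cong_scalar_right)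
  finally have "[t^2 * (\<Sum>i<length a. f i) + (2*t*A*Z + A) = 0 + ((c - A) + A)] (mod p)"
    using iso unfolding f_def by (intro cong_add cong_refl) (simp_all add: cong_0_iff)
  then have rep: "[(\<Sum>i<length a. a!i * (Y i)^2) = c] (mod p)" unfolding sumY by simp
  have "\<exists>l<length a. \<not> p dvd a!l \<and> \<not> p dvd Y l"
  proof (cases "p dvd Y i0")
    case False then show ?thesis using i0 by blast
  next
    case True
    then have "p dvd t*Z + 1" unfolding Y_def Z_def using i0 by simp
    then have "\<not> p dvd t" using p(1) by (metis dvd_add_right_iff dvd_mult2 not_prime_unit)
    have "\<not> p dvd f i0" using assms unfolding f_def by (simp add: prime_dvd_mult_iff prime_dvd_power_iff)
    then obtain i where "i < length a" "i \<noteq> i0" "\<not> p dvd f i"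
      using dvd_sum_other_summand[of "{..<length a}" p f i0] iso i0 unfolding f_def by auto
    with \<open>\<not> p dvd t\<close> p show ?thesis
      by (intro exI[of _ i]) (auto simp: f_def Y_def prime_dvd_mult_iff power2_eq_square split: if_splits)
  qed
  with rep show ?thesis by blast
qed

lemma in_DQ_closure_of_unit_solution_mod_p:
  fixes p :: int and a :: "int list"
  assumes p: "prime p" "odd p" and \<gamma>: "padic p \<gamma>"
    and l: "l < length a" "\<not> p dvd a!l" "\<not> p dvd Y l"
    and Y: "[(\<Sum>i<length a. a!i * (Y i)^2) = \<gamma> 1] (mod p)"
  shows "in_DQ_closure p a \<gamma>"
proof -
  define C where "C = (\<Sum>i\<in>{..<length a} - {l}. a!i * (Y i)^2)"
  have split: "(\<Sum>i<length a. a!i * (Y i)^2) = a!l * (Y l)^2 + C"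
    unfolding C_def using l by (intro sum.remove) auto
  have "[a!l * (Y l)^2 + C - C = \<gamma> 1 - C] (mod p)" using Y unfolding split by (intro cong_diff cong_refl)
  then obtain w where w: "padic p w" "\<And>m. [a!l*(w m)^2 = \<gamma> m - C] (mod p^m)"
    using hensel_padic[OF p l(2,3) \<gamma>] by auto
  define y where "y = (\<lambda>i m. if i = l then w m else Y i mod p^m)"
  have "padic p (y i)" for i
    using w(1) padic_mod_power[of p "\<lambda>_. Y i"] p prime_gt_0_int unfolding y_def by (cases "i = l") auto
  moreover have "[(\<Sum>i<length a. a!i * (y i m)^2) = \<gamma> m] (mod p^m)" for m
  proof -
    have "[(\<Sum>i<length a. a!i * (y i m)^2) = (\<Sum>i<length a. if i = l then a!l*(w m)^2 else a!i * (Y i)^2)] (mod p^m)"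
      by (intro cong_sum) (auto simp: y_def intro!: cong_scalar_left cong_pow)
    also have "(\<Sum>i<length a. if i = l then a!l*(w m)^2 else a!i * (Y i)^2) = a!l*(w m)^2 + C"
      unfolding C_def using l by (subst sum.remove[of _ l]) (auto intro!: sum.cong)
    also have "[a!l*(w m)^2 + C = (\<gamma> m - C) + C] (mod p^m)" using w(2) by (intro cong_add cong_refl)
    finally show ?thesis by simp
  qed
  ultimately show ?thesis unfolding in_DQ_closure_def by blast
qed

lemma p_unstable_unit_part_anisotropic:
  fixes p :: int and a :: "int list"
  assumes p: "prime p" "odd p" and "p_unstable p a"
    and iso: "p dvd (\<Sum>i<length a. if p dvd a!i then 0 else a!i * (z i)^2)"
    and i: "i < length a" "\<not> p dvd a!i"
  shows "p dvd z i"
proof (rule ccontr)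
  assume "\<not> p dvd z i"
  have "in_DQ_closure p a \<gamma>" if "padic p \<gamma>" for \<gamma>
    using isotropic_unit_part_represents_mod_p[OF p iso i \<open>\<not> p dvd z i\<close>, of "\<gamma> 1"]
      in_DQ_closure_of_unit_solution_mod_p[OF p that] by blast
  with \<open>p_unstable p a\<close> show False unfolding p_unstable_def by blast
qed

lemma tri_val_cong: "(\<And>i. i < length c \<Longrightarrow> x i = y i) \<Longrightarrow> tri_val c x = tri_val c y"
  unfolding tri_val_def by simp

lemma two_tri_val: "2 * tri_val c x = (\<Sum>i<length c. c!i * (x i * (x i + 1)))"
  unfolding tri_val_def sum_distrib_left
  by (rule sum.cong) (simp_all add: mult.left_commute[of 2])

lemma tri_val_nonneg: "\<forall>ci\<in>set c. ci \<ge> 0 \<Longrightarrow> tri_val c x \<ge> 0"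
  unfolding tri_val_def
  by (intro sum_nonneg mult_nonneg_nonneg) (auto simp: zero_le_mult_iff pos_imp_zdiv_nonneg_iff)

lemma locally_rep_at_transfer:
  fixes q P n m :: int and a b :: "int list" and F :: "nat \<Rightarrow> int \<Rightarrow> int" and E :: "nat \<Rightarrow> int"
  assumes q: "q > 0" and len: "length b = length a"
    and F: "\<And>i x y M. [x = y] (mod M) \<Longrightarrow> [F i x = F i y] (mod M)"
    and subst: "\<And>i x. i < length a \<Longrightarrow> a!i * (F i x * (F i x + 1)) = P * b!i * (x*(x+1)) + E i"
    and m: "2*m = P*(2*n) + (\<Sum>i<length a. E i)"
    and loc: "locally_rep_at q b n"
  shows "locally_rep_at q a m"
proof -
  obtain x where x: "\<forall>i<length b. padic q (x i)"
    "\<forall>M. [(\<Sum>i<length b. b!i * (x i M * (x i M + 1))) = 2 * n] (mod q ^ M)"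
    using loc unfolding locally_rep_at_def by blast
  define x' where "x' = (\<lambda>i M. F i (x i M) mod q^M)"
  have "padic q (x' i)" if "i < length a" for i
    unfolding x'_def using x(1) that len padic_Suc_cong F by (intro padic_mod_power[OF q]) metis
  moreover have "[(\<Sum>i<length a. a!i * (x' i M * (x' i M + 1))) = 2 * m] (mod q ^ M)" for M
  proof -
    have "[(\<Sum>i<length a. a!i * (x' i M * (x' i M + 1)))
         = (\<Sum>i<length a. a!i * (F i (x i M) * (F i (x i M) + 1)))] (mod q ^ M)"
      unfolding x'_def by (intro cong_sum cong_scalar_left cong_mult cong_add) simp_all
    also have "(\<Sum>i<length a. a!i * (F i (x i M) * (F i (x i M) + 1)))
             = P * (\<Sum>i<length a. b!i * (x i M * (x i M + 1))) + (\<Sum>i<length a. E i)"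
      using subst by (simp add: sum.distrib sum_distrib_left mult.assoc)
    also have "[\<dots> = P * (2*n) + (\<Sum>i<length a. E i)] (mod q^M)"
      using x(2) len by (intro cong_add cong_scalar_left cong_refl) simp
    finally show ?thesis using m by simp
  qed
  ultimately show ?thesis unfolding locally_rep_at_def by blast
qed

lemma length_lambda_p [simp]: "length (lambda_p p a) = length a"
  unfolding lambda_p_def by simp

lemma power_s_min_mult_lambda_p:
  assumes "i < length a"
  shows "p ^ s_min p a * lambda_p p a ! i = p ^ s_exp p (a!i) * a!i"
proof -
  have "s_min p a \<le> multiplicity p (p ^ s_exp p (a!i) * a!i)"
    unfolding s_min_def using assms by (intro Min_le) auto
  then have "p ^ s_min p a dvd p ^ s_exp p (a!i) * a!i" by (rule multiplicity_dvd')
  then show ?thesis using assms unfolding lambda_p_def by simp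
qed

lemma s_min_ge_1:
  fixes p :: int
  assumes "prime p" "a \<noteq> []" "0 \<notin> set a"
  shows "s_min p a \<ge> 1"
proof -
  have "multiplicity p (p ^ s_exp p ai * ai) \<ge> 1" if "ai \<in> set a" for ai
  proof -
    have "p dvd p ^ s_exp p ai * ai" by (cases "p dvd ai") (auto simp: s_exp_def)
    moreover have "p ^ s_exp p ai * ai \<noteq> 0" using assms that by auto
    ultimately have "multiplicity p (p ^ s_exp p ai * ai) > 0"
      using assms(1) by (subst prime_multiplicity_gt_zero_iff) auto
    then show ?thesis by simp
  qed
  then show ?thesis unfolding s_min_def using assms(2) by (simp add: Min_ge_iff)
qed

definition lambda_subst :: "int \<Rightarrow> int list \<Rightarrow> nat \<Rightarrow> int \<Rightarrow> int" where
  "lambda_subst p a i x = (if p dvd a!i then x else p * x + (p - 1) div 2)"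

lemma lambda_subst_term:
  fixes p :: int
  assumes "odd p" "i < length a"
  shows "a!i * (lambda_subst p a i x * (lambda_subst p a i x + 1))
       = p ^ s_min p a * lambda_p p a ! i * (x * (x + 1))
         + a!i * (lambda_subst p a i 0 * (lambda_subst p a i 0 + 1))"
proof -
  have lam: "p ^ s_min p a * lambda_p p a ! i = p ^ s_exp p (a!i) * a!i"
    using power_s_min_mult_lambda_p[OF assms(2)] .
  show ?thesis
  proof (cases "p dvd a!i")
    case True
    then show ?thesis using lam by (simp add: lambda_subst_def s_exp_def)
  next
    case False
    define k where "k = (p - 1) div 2"
    have "p = 2*k + 1" using \<open>odd p\<close> unfolding k_def by presburger
    then have "(p*x + k) * (p*x + k + 1) = p^2 * (x*(x+1)) + k*(k+1)"
      by (simp add: power2_eq_square algebra_simps)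
    moreover have "p ^ s_min p a * lambda_p p a ! i = p^2 * a!i"
      using lam False by (simp add: s_exp_def mult.commute)
    ultimately show ?thesis
      using False unfolding lambda_subst_def k_def[symmetric] by (simp add: algebra_simps)
  qed
qed

lemma tri_val_lambda_subst:
  fixes p :: int
  assumes "odd p"
  shows "tri_val a (\<lambda>i. lambda_subst p a i (x i))
       = p ^ s_min p a * tri_val (lambda_p p a) x + tri_val a (\<lambda>i. lambda_subst p a i 0)"
proof -
  have "2 * tri_val a (\<lambda>i. lambda_subst p a i (x i))
      = (\<Sum>i<length a. p ^ s_min p a * lambda_p p a ! i * (x i * (x i + 1))
                        + a!i * (lambda_subst p a i 0 * (lambda_subst p a i 0 + 1)))"
    unfolding two_tri_val by (rule sum.cong[OF refl], rule lambda_subst_term[OF assms], simp)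
  also have "\<dots> = p ^ s_min p a * (2 * tri_val (lambda_p p a) x) + 2 * tri_val a (\<lambda>i. lambda_subst p a i 0)"
    unfolding sum.distrib two_tri_val length_lambda_p by (simp add: sum_distrib_left mult.assoc)
  finally show ?thesis by (simp add: algebra_simps)
qed

lemma locally_rep_at_lambda_subst:
  fixes p q n :: int
  assumes "odd p" "q > 0" "locally_rep_at q (lambda_p p a) n"
  shows "locally_rep_at q a (p ^ s_min p a * n + tri_val a (\<lambda>i. lambda_subst p a i 0))"
  using assms(2) length_lambda_p _ lambda_subst_term[OF assms(1)] _ assms(3)
proof (rule locally_rep_at_transfer)
  show "[lambda_subst p a i x = lambda_subst p a i y] (mod M)" if "[x = y] (mod M)" for i x y M
    unfolding lambda_subst_def using that by (auto intro: cong_add cong_scalar_left)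
  show "2 * (p ^ s_min p a * n + tri_val a (\<lambda>i. lambda_subst p a i 0))
      = p ^ s_min p a * (2 * n) + (\<Sum>i<length a. a!i * (lambda_subst p a i 0 * (lambda_subst p a i 0 + 1)))"
    using two_tri_val[of a "\<lambda>i. lambda_subst p a i 0"] by (simp add: algebra_simps)
qed

text \<open>Otherwise \<open>z\<^sub>i = 2x\<^sub>i + 1\<close> would be a zero mod \<open>p\<close> of the unimodular part with a unit
  coordinate, since \<open>z\<^sub>i\<^sup>2 = 4x\<^sub>i(x\<^sub>i + 1) + 1\<close> and \<open>p\<^sup>2 = 4k(k + 1) + 1\<close>.\<close>

lemma p_unstable_unit_coords_cong:
  fixes p :: int and a :: "int list" and x :: "nat \<Rightarrow> int"
  assumes p: "prime p" "odd p" and "p_unstable p a"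
    and dvd: "p dvd tri_val a x - tri_val a (\<lambda>i. lambda_subst p a i 0)"
    and i: "i < length a" "\<not> p dvd a!i"
  shows "p dvd x i - (p - 1) div 2"
proof -
  define k where "k = (p - 1) div 2"
  have pk: "p = 2*k + 1" using p(2) unfolding k_def by presburger
  define z where "z = (\<lambda>i. 2 * x i + 1)"
  define D where "D = (\<lambda>i. a!i * (x i * (x i + 1)) - a!i * (lambda_subst p a i 0 * (lambda_subst p a i 0 + 1)))"
  have "p dvd (if p dvd a!j then 0 else a!j * (z j)^2) - 4 * D j" for j
  proof (cases "p dvd a!j")
    case False
    then have "lambda_subst p a j 0 = k" unfolding lambda_subst_def k_def by simp
    then have "a!j * (z j)^2 - 4 * D j = p * (p * a!j)"
      unfolding D_def z_def pk by (simp add: power2_eq_square algebra_simps)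
    with False show ?thesis by simp
  qed (simp add: D_def lambda_subst_def)
  then have "p dvd (\<Sum>j<length a. (if p dvd a!j then 0 else a!j * (z j)^2) - 4 * D j)" by (rule dvd_sum)
  moreover have "(\<Sum>j<length a. D j) = 2 * (tri_val a x - tri_val a (\<lambda>i. lambda_subst p a i 0))"
    unfolding D_def right_diff_distrib two_tri_val by (simp add: sum_subtractf)
  then have "p dvd 4 * (\<Sum>j<length a. D j)" using dvd by (simp only: dvd_mult)
  ultimately have "p dvd (\<Sum>j<length a. (if p dvd a!j then 0 else a!j * (z j)^2) - 4 * D j)
                       + 4 * (\<Sum>j<length a. D j)"
    by (rule dvd_add)
  then have "p dvd (\<Sum>j<length a. if p dvd a!j then 0 else a!j * (z j)^2)"
    by (simp add: sum_subtractf sum_distrib_left)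
  then have "p dvd z i" using p_unstable_unit_part_anisotropic[OF p \<open>p_unstable p a\<close> _ i] by blast
  moreover have "z i = 2 * (x i - k) + p" unfolding z_def pk by simp
  ultimately have "p dvd 2 * (x i - k)" using dvd_add_left_iff[OF dvd_refl[of p]] by metis
  then show ?thesis using odd_prime_not_dvd_2_mult[OF p] unfolding k_def by blast
qed

lemma lambda_subst_preimage:
  fixes p :: int and a :: "int list" and x' :: "nat \<Rightarrow> int"
  assumes p: "prime p" "odd p" and "p_unstable p a"
    and dvd: "p dvd tri_val a x' - tri_val a (\<lambda>i. lambda_subst p a i 0)"
  shows "\<exists>x. \<forall>i<length a. lambda_subst p a i (x i) = x' i"
proof -
  define k where "k = (p - 1) div 2"
  define x where "x i = (if p dvd a!i then x' i else (x' i - k) div p)" for i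
  have "lambda_subst p a i (x i) = x' i" if "i < length a" for i
  proof (cases "p dvd a!i")
    case False
    then have "p * ((x' i - k) div p) = x' i - k"
      using p_unstable_unit_coords_cong[OF assms that] unfolding k_def by simp
    with False show ?thesis unfolding x_def lambda_subst_def k_def[symmetric] by simp
  qed (simp add: x_def lambda_subst_def)
  then show ?thesis by blast
qed

theorem proposition3p6:
  fixes p :: int and a :: "int list"
  assumes "prime p" and "odd p"
    and "length a \<ge> 4"
    and "\<forall>ai\<in>set a. ai > 0"
    and "Gcd (set a) = 1"
    and "regular a"
    and "p_unstable p a"
  shows "regular (lambda_p p a)"
  unfolding regular_def
proof (intro allI impI)
  fix n :: int assume "n > 0" and "locally_represented (lambda_p p a) n"
  define s where "s = s_min p a"
  define K where "K = tri_val a (\<lambda>i. lambda_subst p a i 0)"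
  have "p > 0" using assms(1) prime_gt_0_int by blast
  have "s \<ge> 1" unfolding s_def using assms(1,3,4) by (intro s_min_ge_1) auto
  have "locally_represented a (p^s * n + K)"
    using \<open>locally_represented (lambda_p p a) n\<close> locally_rep_at_lambda_subst[OF assms(2)] prime_gt_0_int
    unfolding locally_represented_def s_def K_def by blast
  moreover have "p^s * n + K > 0"
  proof -
    have "K \<ge> 0" unfolding K_def using assms(4) by (intro tri_val_nonneg) auto
    moreover have "p^s * n > 0" using \<open>n > 0\<close> \<open>p > 0\<close> by simp
    ultimately show ?thesis by linarith
  qed
  ultimately obtain x' where x': "tri_val a x' = p^s * n + K"
    using assms(6) unfolding regular_def represented_def by blast
  have "p dvd tri_val a x' - K" using \<open>s \<ge> 1\<close> unfolding x' by (simp add: dvd_power)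
  then obtain x where "\<forall>i<length a. lambda_subst p a i (x i) = x' i"
    using lambda_subst_preimage[OF assms(1,2,7)] unfolding K_def by blast
  then have "tri_val a x' = tri_val a (\<lambda>i. lambda_subst p a i (x i))" by (intro tri_val_cong) simp
  then have "p^s * tri_val (lambda_p p a) x + K = p^s * n + K"
    using tri_val_lambda_subst[OF assms(2), of a x] x' unfolding s_def K_def by linarith
  then have "tri_val (lambda_p p a) x = n" using \<open>p > 0\<close> by simp
  then show "represented (lambda_p p a) n" unfolding represented_def by blast
qed

end
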